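(* Let $p\ge 3$ be an integer, let $T$ be a tree and let $\ell=|V(T^{p+1})|$. Then $T^{p+1}\subseteq P_\ell\vee K((p-1)\ell;p-1)$ and $T^{p+1}\subseteq \ell P_2\vee K(2(p-1)\ell;p-1)$.
   Context: For a graph $F$ and integer $p\ge1$, the edge blow-up $F^{p+1}$ is the graph obtained from $F$ by replacing each edge by a clique $K_{p+1}$ containing that edge, where the newly added vertices of the different cliques are all distinct. $P_\ell$ is the path on $\ell$ vertices, $\ell P_2$ is a matching of $\ell$ edges, $K(N;q)$ is the complete $q$-partite graph on $N$ vertices with part sizes differing by at most one, $\vee$ denotes the join of vertex-disjoint graphs, and $\subseteq$ means "is isomorphic to a subgraph of". *)

theory Defs
  imports Main
begin

record 'a ugraph =
  verts :: "'a set"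
  edges :: "'a set set"

definition wf_graph :: "'a ugraph \<Rightarrow> bool" where
  "wf_graph G \<longleftrightarrow> finite (verts G) \<and>
     (\<forall>e\<in>edges G. e \<subseteq> verts G \<and> card e = 2)"

definition adj :: "'a ugraph \<Rightarrow> 'a \<Rightarrow> 'a \<Rightarrow> bool" where
  "adj G u v \<longleftrightarrow> {u, v} \<in> edges G"

definition connected_graph :: "'a ugraph \<Rightarrow> bool" where
  "connected_graph G \<longleftrightarrow> (\<forall>u\<in>verts G. \<forall>v\<in>verts G. (adj G)\<^sup>*\<^sup>* u v)"

definition is_cycle :: "'a ugraph \<Rightarrow> 'a list \<Rightarrow> bool" where
  "is_cycle G cs \<longleftrightarrow> length cs \<ge> 3 \<and> distinct cs \<and> set cs \<subseteq> verts G \<and>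
     (\<forall>i. Suc i < length cs \<longrightarrow> adj G (cs ! i) (cs ! Suc i)) \<and>
     adj G (last cs) (hd cs)"

definition is_tree :: "'a ugraph \<Rightarrow> bool" where
  "is_tree G \<longleftrightarrow> wf_graph G \<and> verts G \<noteq> {} \<and> connected_graph G \<and>
     \<not> (\<exists>cs. is_cycle G cs)"

text \<open>Edge blow-up F^{p+1}: each edge e gets p-1 new vertices Inr (e,i), i < p-1,
  forming a clique K_{p+1} together with the ends of e.\<close>
definition blowup_clique :: "nat \<Rightarrow> 'a set \<Rightarrow> ('a + 'a set \<times> nat) set" where
  "blowup_clique p e = Inl ` e \<union> {Inr (e, i) | i. i < p - 1}"

definition edge_blowup :: "nat \<Rightarrow> 'a ugraph \<Rightarrow> ('a + 'a set \<times> nat) ugraph" where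
  "edge_blowup p G =
     \<lparr> verts = Inl ` verts G \<union> {Inr (e, i) | e i. e \<in> edges G \<and> i < p - 1},
       edges = {{x, y} | x y e. e \<in> edges G \<and> x \<in> blowup_clique p e \<and>
                                 y \<in> blowup_clique p e \<and> x \<noteq> y} \<rparr>"

definition path_graph :: "nat \<Rightarrow> nat ugraph" where
  "path_graph l = \<lparr> verts = {0..<l}, edges = {{i, Suc i} | i. Suc i < l} \<rparr>"

definition matching_graph :: "nat \<Rightarrow> nat ugraph" where
  "matching_graph l = \<lparr> verts = {0..<2*l}, edges = {{2*i, 2*i+1} | i. i < l} \<rparr>"

definition turan_graph :: "nat \<Rightarrow> nat \<Rightarrow> nat ugraph" where
  "turan_graph N q = \<lparr> verts = {0..<N},
     edges = {{i, j} | i j. i < N \<and> j < N \<and> i mod q \<noteq> j mod q} \<rparr>"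

definition graph_join :: "'a ugraph \<Rightarrow> 'b ugraph \<Rightarrow> ('a + 'b) ugraph" where
  "graph_join G H = \<lparr> verts = Inl ` verts G \<union> Inr ` verts H,
     edges = (\<lambda>e. Inl ` e) ` edges G \<union> (\<lambda>e. Inr ` e) ` edges H \<union>
             {{Inl x, Inr y} | x y. x \<in> verts G \<and> y \<in> verts H} \<rparr>"

definition subgraph_iso :: "'a ugraph \<Rightarrow> 'b ugraph \<Rightarrow> bool" where
  "subgraph_iso H G \<longleftrightarrow> (\<exists>f. inj_on f (verts H) \<and> f ` verts H \<subseteq> verts G \<and>
     (\<forall>e\<in>edges H. f ` e \<in> edges G))"

end

theory Submission
  imports Defs
begin

text \<open>A tree is bipartite; fix a proper 2-colouring of it. In the clique of the blow-up
  built on an edge e, send the two new vertices Inr (e, 0) and Inr (e, 1) to an edge of the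
  matching reserved for e (every other edge of the path serves as well). The remaining p - 1
  vertices of the clique are the two ends of e, with tree colours 0 and 1, and the new vertices
  Inr (e, i), 2 \<le> i < p - 1, which get colour i. This is a proper (p - 1)-colouring of the rest
  of the blow-up, which therefore embeds into K((p - 1) l; p - 1). The join supplies every edge
  between the two parts.\<close>

lemma adj_commute: "adj G u v \<longleftrightarrow> adj G v u"
  by (simp add: adj_def insert_commute)

lemma not_adj_self: "wf_graph G \<Longrightarrow> \<not> adj G x x"
  by (auto simp: wf_graph_def adj_def)

lemma adj_in_verts: "wf_graph G \<Longrightarrow> adj G x y \<Longrightarrow> x \<in> verts G \<and> y \<in> verts G"
  by (auto simp: wf_graph_def adj_def)

lemma finite_edges: "wf_graph G \<Longrightarrow> finite (edges G)"
  unfolding wf_graph_def by (meson Pow_iff finite_Pow_iff finite_subset subsetI)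

lemma wf_graph_edgeE:
  assumes "wf_graph G" and "e \<in> edges G"
  obtains x y where "e = {x, y}" and "x \<noteq> y" and "adj G x y"
  using assms by (auto simp: wf_graph_def adj_def card_2_iff)

fun walk :: "'a ugraph \<Rightarrow> 'a list \<Rightarrow> bool" where
  "walk G [] = True"
| "walk G [x] = True"
| "walk G (x # y # xs) \<longleftrightarrow> adj G x y \<and> walk G (y # xs)"

lemma walk_append:
  "walk G (xs @ ys) \<longleftrightarrow>
     walk G xs \<and> walk G ys \<and> (xs \<noteq> [] \<and> ys \<noteq> [] \<longrightarrow> adj G (last xs) (hd ys))"
  by (induction G xs rule: walk.induct) (cases ys; auto)+

lemma walk_rev: "walk G (rev xs) \<longleftrightarrow> walk G xs"
  by (induction G xs rule: walk.induct) (auto simp: walk_append adj_commute)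

lemma walk_ConsD: "walk G (x # xs) \<Longrightarrow> walk G xs"
  using walk_append[of G "[x]" xs] by simp

lemma walk_nth: "walk G xs \<Longrightarrow> Suc i < length xs \<Longrightarrow> adj G (xs ! i) (xs ! Suc i)"
proof (induction G xs arbitrary: i rule: walk.induct)
  case (3 G x y xs)
  then show ?case by (cases i) auto
qed auto

lemma walk_subset_verts:
  "wf_graph G \<Longrightarrow> walk G xs \<Longrightarrow> length xs \<ge> 2 \<Longrightarrow> set xs \<subseteq> verts G"
proof (induction G xs rule: walk.induct)
  case (3 G x y xs)
  then show ?case using adj_in_verts[of G x y] by (cases xs) auto
qed auto

lemma rtranclp_adj_imp_walk:
  "(adj G)\<^sup>*\<^sup>* r v \<Longrightarrow> \<exists>ws. walk G (r # ws) \<and> last (r # ws) = v"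
proof (induction rule: rtranclp_induct)
  case base
  show ?case by (intro exI[of _ "[]"]) simp
next
  case (step y z)
  then obtain ws where "walk G (r # ws)" "last (r # ws) = y" by blast
  with step(2) show ?case
    by (intro exI[of _ "ws @ [z]"]) (simp add: walk_append[of G "r # ws" "[z]", simplified])
qed

definition closed_walk :: "'a ugraph \<Rightarrow> 'a list \<Rightarrow> bool" where
  "closed_walk G cs \<longleftrightarrow> cs \<noteq> [] \<and> walk G cs \<and> adj G (last cs) (hd cs)"

lemma closed_walk_rotate: "closed_walk G (xs @ ys) \<Longrightarrow> closed_walk G (ys @ xs)"
  by (cases "xs = []"; cases "ys = []") (auto simp: closed_walk_def walk_append)

lemma distinct_closed_walk_is_cycle:
  assumes "wf_graph G" and "closed_walk G cs" and "distinct cs" and "length cs \<ge> 3"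
  shows "is_cycle G cs"
  using assms walk_subset_verts[OF assms(1)] walk_nth
  by (auto simp: closed_walk_def is_cycle_def)

text \<open>A repeated vertex splits an odd closed walk into two shorter closed walks, one of
  which is odd.\<close>
lemma odd_closed_walk_imp_cycle:
  assumes "wf_graph G" and "closed_walk G cs" and "odd (length cs)"
  shows "\<exists>c. is_cycle G c"
  using assms(2,3)
proof (induction "length cs" arbitrary: cs rule: less_induct)
  case less
  show ?case
  proof (cases "distinct cs")
    case True
    have "length cs \<noteq> 1"
    proof
      assume "length cs = 1"
      then obtain x where "cs = [x]" by (cases cs) auto
      with less.prems(1) show False using not_adj_self[OF assms(1)] by (auto simp: closed_walk_def)
    qed
    with less.prems(2) have "length cs \<ge> 3" by presburger
    with less.prems(1) True show ?thesis using distinct_closed_walk_is_cycle[OF assms(1)] by blast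
  next
    case False
    then obtain A x B C where cs: "cs = A @ [x] @ B @ [x] @ C"
      using not_distinct_decomp by blast
    have "closed_walk G ((x # B) @ (x # C @ A))"
      using closed_walk_rotate[of G A "[x] @ B @ [x] @ C"] less.prems(1) cs by simp
    then have c1: "closed_walk G (x # B)" and c2: "closed_walk G (x # C @ A)"
      unfolding closed_walk_def walk_append[of G "x # B" "x # C @ A"] by auto
    have len: "length cs = length (x # B) + length (x # C @ A)" using cs by simp
    show ?thesis
    proof (cases "odd (length (x # B))")
      case True
      with len c1 show ?thesis by (intro less.hyps[of "x # B"]) simp_all
    next
      case False
      with len less.prems(2) c2 show ?thesis by (intro less.hyps[of "x # C @ A"]) simp_all
    qed
  qed
qed

lemma acyclic_walks_to_adjacent_parity:
  assumes "wf_graph G" and "\<nexists>cs. is_cycle G cs" and "adj G u v"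
    and us: "walk G (r # us)" "last (r # us) = u"
    and vs: "walk G (r # vs)" "last (r # vs) = v"
  shows "even (length us) \<longleftrightarrow> odd (length vs)"
proof (rule ccontr)
  assume same_parity: "\<not> ?thesis"
  define cs where "cs = (r # us) @ rev vs"
  have "walk G cs"
    using us vs \<open>adj G u v\<close> walk_ConsD[of G r vs]
    unfolding cs_def walk_append[of G "r # us" "rev vs"] by (auto simp: walk_rev hd_rev)
  moreover have "adj G (last cs) (hd cs)"
  proof (cases vs)
    case Nil
    with us vs \<open>adj G u v\<close> not_adj_self[OF assms(1)] show ?thesis by (auto simp: cs_def)
  next
    case (Cons w ws)
    with vs(1) show ?thesis by (simp add: cs_def adj_commute)
  qed
  ultimately have "closed_walk G cs" by (simp add: closed_walk_def cs_def)
  moreover from same_parity have "odd (length cs)" by (simp add: cs_def)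
  ultimately show False using odd_closed_walk_imp_cycle[OF assms(1)] assms(2) by blast
qed

text \<open>Colour each vertex by the parity of the length of a walk to it from a fixed root.\<close>
lemma tree_two_colouring:
  assumes "is_tree T"
  obtains col :: "'a \<Rightarrow> nat" where "\<And>u. col u < 2" and "\<And>u v. adj T u v \<Longrightarrow> col u \<noteq> col v"
proof -
  have wf: "wf_graph T" and acyclic: "\<nexists>cs. is_cycle T cs"
    using assms by (auto simp: is_tree_def)
  obtain r where r: "r \<in> verts T" using assms by (auto simp: is_tree_def)
  define W where "W v = (SOME ws. walk T (r # ws) \<and> last (r # ws) = v)" for v
  have W: "walk T (r # W v) \<and> last (r # W v) = v" if "v \<in> verts T" for v
  proof -
    have "(adj T)\<^sup>*\<^sup>* r v"
      using assms r that by (auto simp: is_tree_def connected_graph_def)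
    then show ?thesis unfolding W_def by (rule someI_ex[OF rtranclp_adj_imp_walk])
  qed
  show ?thesis
  proof
    fix u v assume "adj T u v"
    with W adj_in_verts[OF wf] acyclic_walks_to_adjacent_parity[OF wf acyclic]
    show "length (W u) mod 2 \<noteq> length (W v) mod 2"
      by (metis even_iff_mod_2_eq_zero)
  qed simp
qed

lemma subgraph_iso_trans:
  assumes "subgraph_iso F G" and "subgraph_iso G H"
  shows "subgraph_iso F H"
proof -
  from assms obtain f g where
    f: "inj_on f (verts F)" "f ` verts F \<subseteq> verts G" "\<forall>e\<in>edges F. f ` e \<in> edges G" and
    g: "inj_on g (verts G)" "g ` verts G \<subseteq> verts H" "\<forall>e\<in>edges G. g ` e \<in> edges H"
    by (auto simp: subgraph_iso_def)
  have "inj_on (g \<circ> f) (verts F)" using f g by (auto intro: comp_inj_on inj_on_subset)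
  moreover have "(g \<circ> f) ` verts F \<subseteq> verts H" using f(2) g(2) by auto
  moreover have "(g \<circ> f) ` e \<in> edges H" if "e \<in> edges F" for e
    using f(3) g(3) that by (metis image_comp)
  ultimately show ?thesis unfolding subgraph_iso_def by blast
qed

lemma subgraph_imp_subgraph_iso:
  "verts H \<subseteq> verts G \<Longrightarrow> edges H \<subseteq> edges G \<Longrightarrow> subgraph_iso H G"
  unfolding subgraph_iso_def by (intro exI[of _ id]) auto

definition induced_subgraph :: "'a ugraph \<Rightarrow> 'a set \<Rightarrow> 'a ugraph" where
  "induced_subgraph G A = \<lparr>verts = verts G \<inter> A, edges = {e \<in> edges G. e \<subseteq> A}\<rparr>"

lemma wf_graph_induced_subgraph: "wf_graph G \<Longrightarrow> wf_graph (induced_subgraph G A)"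
  by (auto simp: wf_graph_def induced_subgraph_def)

lemma graph_join_cross_edge:
  "a \<in> verts X \<Longrightarrow> b \<in> verts Y \<Longrightarrow> {Inl a, Inr b} \<in> edges (graph_join X Y)"
  by (auto simp: graph_join_def)

lemma subgraph_iso_graph_join:
  assumes "wf_graph G"
    and "subgraph_iso (induced_subgraph G A) X"
    and "subgraph_iso (induced_subgraph G (- A)) Y"
  shows "subgraph_iso G (graph_join X Y)"
proof -
  from assms(2,3) obtain f1 f2 where
    f1: "inj_on f1 (verts G \<inter> A)" "f1 ` (verts G \<inter> A) \<subseteq> verts X"
      "\<And>e. e \<in> edges G \<Longrightarrow> e \<subseteq> A \<Longrightarrow> f1 ` e \<in> edges X" and
    f2: "inj_on f2 (verts G - A)" "f2 ` (verts G - A) \<subseteq> verts Y"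
      "\<And>e. e \<in> edges G \<Longrightarrow> e \<subseteq> - A \<Longrightarrow> f2 ` e \<in> edges Y"
    by (auto simp: subgraph_iso_def induced_subgraph_def Diff_eq)
  define f where "f x = (if x \<in> A then Inl (f1 x) else Inr (f2 x))" for x
  have "inj_on f (verts G)"
    using f1(1) f2(1) by (auto simp: inj_on_def f_def)
  moreover have "f ` verts G \<subseteq> verts (graph_join X Y)"
    using f1(2) f2(2) by (auto simp: f_def graph_join_def)
  moreover have "f ` e \<in> edges (graph_join X Y)" if edge: "e \<in> edges G" for e
  proof -
    obtain x y where e: "e = {x, y}" and "adj G x y"
      using wf_graph_edgeE[OF assms(1) edge] by blast
    then have xy: "x \<in> verts G" "y \<in> verts G" using adj_in_verts[OF assms(1)] by blast+
    consider "x \<in> A" "y \<in> A" | "x \<notin> A" "y \<notin> A" | "x \<in> A" "y \<notin> A" | "x \<notin> A" "y \<in> A"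
      by blast
    then show ?thesis
    proof cases
      case 1
      then have "f ` e = Inl ` (f1 ` e)" and "f1 ` e \<in> edges X"
        using f1(3)[OF edge] by (auto simp: e f_def)
      then have "f ` e \<in> (\<lambda>e. Inl ` e) ` edges X" by simp
      then show ?thesis by (simp add: graph_join_def)
    next
      case 2
      then have "f ` e = Inr ` (f2 ` e)" and "f2 ` e \<in> edges Y"
        using f2(3)[OF edge] by (auto simp: e f_def)
      then have "f ` e \<in> (\<lambda>e. Inr ` e) ` edges Y" by simp
      then show ?thesis by (simp add: graph_join_def)
    next
      case 3
      then have "f ` e = {Inl (f1 x), Inr (f2 y)}" by (auto simp: e f_def)
      with 3 xy f1(2) f2(2) show ?thesis by (simp add: graph_join_cross_edge image_subset_iff)
    next
      case 4
      then have "f ` e = {Inl (f1 y), Inr (f2 x)}" by (auto simp: e f_def)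
      with 4 xy f1(2) f2(2) show ?thesis by (simp add: graph_join_cross_edge image_subset_iff)
    qed
  qed
  ultimately show ?thesis unfolding subgraph_iso_def by blast
qed

lemma colourable_subgraph_iso_turan_graph:
  assumes "wf_graph G" and "card (verts G) \<le> n"
    and "\<And>x. x \<in> verts G \<Longrightarrow> c x < q" and "\<And>x y. adj G x y \<Longrightarrow> c x \<noteq> c y"
  shows "subgraph_iso G (turan_graph (q * n) q)"
proof -
  obtain g where g: "bij_betw g (verts G) {0..<card (verts G)}"
    using ex_bij_betw_finite_nat assms(1) by (metis wf_graph_def)
  define f where "f x = q * g x + c x" for x
  have f_mod: "f x mod q = c x" and f_div: "f x div q = g x" if "x \<in> verts G" for x
    using assms(3)[OF that] by (simp_all add: f_def)
  have f_less: "f x < q * n" if "x \<in> verts G" for x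
  proof -
    have "g x < n" using bij_betwE[OF g] that assms(2) by fastforce
    have "f x < q * (g x + 1)" using assms(3)[OF that] by (simp add: f_def)
    also have "\<dots> \<le> q * n" using \<open>g x < n\<close> by (intro mult_le_mono2) simp
    finally show ?thesis .
  qed
  have "inj_on f (verts G)"
  proof (rule inj_onI)
    fix x y assume "x \<in> verts G" "y \<in> verts G" "f x = f y"
    with f_div have "g x = g y" by metis
    with g \<open>x \<in> verts G\<close> \<open>y \<in> verts G\<close> show "x = y" by (auto dest: bij_betw_imp_inj_on inj_onD)
  qed
  moreover have "f ` verts G \<subseteq> verts (turan_graph (q * n) q)"
    using f_less by (auto simp: turan_graph_def)
  moreover have "f ` e \<in> edges (turan_graph (q * n) q)" if "e \<in> edges G" for e
  proof -
    obtain x y where e: "e = {x, y}" and "adj G x y"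
      using wf_graph_edgeE[OF assms(1) \<open>e \<in> edges G\<close>] by blast
    then have "x \<in> verts G" "y \<in> verts G" and "f x mod q \<noteq> f y mod q"
      using adj_in_verts[OF assms(1)] assms(4) f_mod by metis+
    with f_less have "{f x, f y} \<in> edges (turan_graph (q * n) q)"
      unfolding turan_graph_def by auto
    then show ?thesis by (simp add: e)
  qed
  ultimately show ?thesis unfolding subgraph_iso_def by blast
qed

lemma edge_blowup_edgeE:
  assumes "d \<in> edges (edge_blowup p T)"
  obtains x y e where "d = {x, y}" and "x \<noteq> y" and "e \<in> edges T"
    and "x \<in> blowup_clique p e" and "y \<in> blowup_clique p e"
  using assms by (auto simp: edge_blowup_def)

lemma edge_blowup_adjE:
  assumes "adj (edge_blowup p T) x y"
  obtains e where "e \<in> edges T" and "x \<in> blowup_clique p e" and "y \<in> blowup_clique p e"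
    and "x \<noteq> y"
proof -
  from assms obtain x' y' e where "{x, y} = {x', y'}" "x' \<noteq> y'" "e \<in> edges T"
    "x' \<in> blowup_clique p e" "y' \<in> blowup_clique p e"
    unfolding adj_def by (elim edge_blowup_edgeE)
  then show ?thesis using that by (auto simp: doubleton_eq_iff)
qed

lemma blowup_clique_subset_verts:
  "wf_graph T \<Longrightarrow> e \<in> edges T \<Longrightarrow> blowup_clique p e \<subseteq> verts (edge_blowup p T)"
  by (force simp: wf_graph_def blowup_clique_def edge_blowup_def)

lemma verts_edge_blowup:
  "verts (edge_blowup p T) = Inl ` verts T \<union> (\<lambda>(e, i). Inr (e, i)) ` (edges T \<times> {..<p - 1})"
  by (auto simp: edge_blowup_def)

lemma wf_graph_edge_blowup:
  assumes "wf_graph T"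
  shows "wf_graph (edge_blowup p T)"
proof -
  have "finite (verts (edge_blowup p T))"
    using assms finite_edges[OF assms] unfolding wf_graph_def verts_edge_blowup by simp
  moreover have "d \<subseteq> verts (edge_blowup p T) \<and> card d = 2" if "d \<in> edges (edge_blowup p T)" for d
    using that blowup_clique_subset_verts[OF assms] by (elim edge_blowup_edgeE) auto
  ultimately show ?thesis by (simp add: wf_graph_def)
qed

lemma card_edges_le_card_edge_blowup:
  assumes "p \<ge> 3" and "wf_graph T"
  shows "2 * card (edges T) \<le> card (verts (edge_blowup p T))"
proof -
  have "2 * card (edges T) \<le> (p - 1) * card (edges T)"
    using assms(1) by (intro mult_le_mono1) simp
  also have "\<dots> = card (edges T \<times> {..<p - 1})"
    by (simp add: card_cartesian_product)
  also have "\<dots> = card ((\<lambda>(e, i). Inr (e, i)) ` (edges T \<times> {..<p - 1})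
                      :: ('a + 'a set \<times> nat) set)"
    by (rule card_image[symmetric]) (auto simp: inj_on_def)
  also have "\<dots> \<le> card (verts (edge_blowup p T))"
    using wf_graph_edge_blowup[OF assms(2)]
    by (intro card_mono) (auto simp: wf_graph_def verts_edge_blowup)
  finally show ?thesis .
qed

definition matched_verts :: "'a ugraph \<Rightarrow> ('a + 'a set \<times> nat) set" where
  "matched_verts T = {Inr (e, i) | e i. e \<in> edges T \<and> i < 2}"

lemma matched_clique_vert:
  "x \<in> blowup_clique p e \<Longrightarrow> x \<in> matched_verts T \<Longrightarrow> \<exists>i < 2. x = Inr (e, i)"
  by (auto simp: blowup_clique_def matched_verts_def)

lemma matched_part_subgraph_iso_matching_graph:
  assumes "wf_graph T"
  shows "subgraph_iso (induced_subgraph (edge_blowup p T) (matched_verts T))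
           (matching_graph (card (edges T)))"
proof -
  define m where "m = card (edges T)"
  define G where "G = induced_subgraph (edge_blowup p T) (matched_verts T)"
  obtain h where h: "bij_betw h (edges T) {0..<m}"
    using ex_bij_betw_finite_nat[OF finite_edges[OF assms]] unfolding m_def by blast
  have h_less: "h e < m" if "e \<in> edges T" for e
    using bij_betw_apply[OF h that] by simp
  define f where "f x = (case x of Inl _ \<Rightarrow> 0 | Inr (e, i) \<Rightarrow> 2 * h e + i)"
    for x :: "'a + 'a set \<times> nat"
  have verts_G: "\<exists>e i. x = Inr (e, i) \<and> e \<in> edges T \<and> i < 2" if "x \<in> verts G" for x
    using that by (auto simp: G_def induced_subgraph_def matched_verts_def)
  have "inj_on f (verts G)"
  proof (rule inj_onI)
    fix x y assume "x \<in> verts G" "y \<in> verts G" and f_eq: "f x = f y"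
    obtain e i where x: "x = Inr (e, i)" "e \<in> edges T" "i < 2"
      using verts_G[OF \<open>x \<in> verts G\<close>] by blast
    obtain e' j where y: "y = Inr (e', j)" "e' \<in> edges T" "j < 2"
      using verts_G[OF \<open>y \<in> verts G\<close>] by blast
    have "h e = f x div 2" "i = f x mod 2" and "h e' = f y div 2" "j = f y mod 2"
      using x y by (simp_all add: f_def)
    with f_eq have "h e = h e'" "i = j" by simp_all
    with bij_betw_imp_inj_on[OF h] x y show "x = y" by (simp add: inj_on_eq_iff)
  qed
  moreover have "f x \<in> verts (matching_graph m)" if x: "x \<in> verts G" for x
  proof -
    obtain e i where "x = Inr (e, i)" "e \<in> edges T" "i < 2"
      using verts_G[OF x] by blast
    moreover from this(2) have "h e < m" by (rule h_less)
    ultimately show ?thesis by (simp add: f_def matching_graph_def)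
  qed
  moreover have "f ` d \<in> edges (matching_graph m)" if "d \<in> edges G" for d
  proof -
    have "d \<in> edges (edge_blowup p T)" and d_matched: "d \<subseteq> matched_verts T"
      using that by (auto simp: G_def induced_subgraph_def)
    then obtain x y e where d: "d = {x, y}" "x \<noteq> y" "e \<in> edges T"
      and "x \<in> blowup_clique p e" "y \<in> blowup_clique p e"
      by (elim edge_blowup_edgeE)
    with d_matched obtain i j where ij: "x = Inr (e, i)" "y = Inr (e, j)" "i < 2" "j < 2"
      using matched_clique_vert by (metis insert_subset)
    with \<open>x \<noteq> y\<close> have "{i, j} = {0, 1}" by auto
    have "f ` d = (\<lambda>k. 2 * h e + k) ` {i, j}" using ij by (simp add: d f_def)
    also have "\<dots> = {2 * h e, Suc (2 * h e)}" unfolding \<open>{i, j} = {0, 1}\<close> by simp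
    finally have "f ` d = {2 * h e, Suc (2 * h e)}" .
    with h_less[OF \<open>e \<in> edges T\<close>] show ?thesis by (auto simp: matching_graph_def)
  qed
  ultimately show ?thesis unfolding subgraph_iso_def G_def m_def by blast
qed

lemma unmatched_clique_vert:
  "x \<in> blowup_clique p e \<Longrightarrow> e \<in> edges T \<Longrightarrow> x \<notin> matched_verts T \<Longrightarrow>
     (\<exists>u \<in> e. x = Inl u) \<or> (\<exists>i \<ge> 2. x = Inr (e, i))"
  by (auto simp: blowup_clique_def matched_verts_def)

definition blowup_colour :: "('a \<Rightarrow> nat) \<Rightarrow> 'a + 'a set \<times> nat \<Rightarrow> nat" where
  "blowup_colour col x = (case x of Inl v \<Rightarrow> col v | Inr (e, i) \<Rightarrow> i)"

lemma blowup_colour_distinct: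
  fixes col :: "'a \<Rightarrow> nat"
  assumes "wf_graph T" and "\<And>u. col u < 2" and "\<And>u v. adj T u v \<Longrightarrow> col u \<noteq> col v"
    and e: "e \<in> edges T" and "x \<in> blowup_clique p e" and "y \<in> blowup_clique p e" and "x \<noteq> y"
    and "x \<notin> matched_verts T" and "y \<notin> matched_verts T"
  shows "blowup_colour col x \<noteq> blowup_colour col y"
proof -
  have col_inj: "u = v" if "u \<in> e" "v \<in> e" "col u = col v" for u v
    using wf_graph_edgeE[OF assms(1) e] that assms(3) by (metis adj_commute insertE singletonD)
  have col_small: "\<not> 2 \<le> col u" for u
    using assms(2)[of u] by linarith
  show ?thesis
    using unmatched_clique_vert[OF assms(5) e assms(8)] unmatched_clique_vert[OF assms(6) e assms(9)]
      \<open>x \<noteq> y\<close> by (auto simp: blowup_colour_def col_small intro: col_inj)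
qed

lemma unmatched_part_subgraph_iso_turan_graph:
  fixes col :: "'a \<Rightarrow> nat"
  assumes "p \<ge> 3" and "wf_graph T"
    and "\<And>u. col u < 2" and "\<And>u v. adj T u v \<Longrightarrow> col u \<noteq> col v"
  shows "subgraph_iso (induced_subgraph (edge_blowup p T) (- matched_verts T))
           (turan_graph ((p - 1) * card (verts (edge_blowup p T))) (p - 1))"
proof (rule colourable_subgraph_iso_turan_graph)
  let ?B = "edge_blowup p T" and ?G = "induced_subgraph (edge_blowup p T) (- matched_verts T)"
  have wf_B: "wf_graph ?B" using wf_graph_edge_blowup[OF assms(2)] .
  then show "wf_graph ?G" by (rule wf_graph_induced_subgraph)
  have "verts ?G \<subseteq> verts ?B" by (simp add: induced_subgraph_def)
  with wf_B show "card (verts ?G) \<le> card (verts ?B)"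
    by (intro card_mono) (simp_all add: wf_graph_def)
  show "blowup_colour col x < p - 1" if "x \<in> verts ?G" for x
  proof -
    from that have "x \<in> verts ?B" by (simp add: induced_subgraph_def)
    then consider v where "x = Inl v" | e i where "x = Inr (e, i)" "i < p - 1"
      by (auto simp: edge_blowup_def)
    then show ?thesis
    proof cases
      case (1 v)
      with assms(1) assms(3)[of v] show ?thesis by (simp add: blowup_colour_def)
    qed (simp add: blowup_colour_def)
  qed
  show "blowup_colour col x \<noteq> blowup_colour col y" if "adj ?G x y" for x y
  proof -
    from that have "adj ?B x y" and "x \<notin> matched_verts T" "y \<notin> matched_verts T"
      by (auto simp: adj_def induced_subgraph_def)
    then show ?thesis
      by (elim edge_blowup_adjE) (rule blowup_colour_distinct[OF assms(2-4)])
  qed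
qed

lemma matching_graph_subgraph_iso_path_graph:
  assumes "2 * m \<le> l"
  shows "subgraph_iso (matching_graph m) (path_graph l)"
proof (rule subgraph_imp_subgraph_iso)
  show "verts (matching_graph m) \<subseteq> verts (path_graph l)"
    using assms by (auto simp: matching_graph_def path_graph_def)
  show "edges (matching_graph m) \<subseteq> edges (path_graph l)"
  proof
    fix d assume "d \<in> edges (matching_graph m)"
    then obtain i where "d = {2 * i, Suc (2 * i)}" and "i < m" by (auto simp: matching_graph_def)
    with assms have "d = {2 * i, Suc (2 * i)} \<and> Suc (2 * i) < l" by linarith
    then show "d \<in> edges (path_graph l)"
      unfolding path_graph_def ugraph.select_convs mem_Collect_eq by (rule exI)
  qed
qed

lemma matching_graph_subgraph_iso_mono:
  assumes "m \<le> l"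
  shows "subgraph_iso (matching_graph m) (matching_graph l)"
proof (rule subgraph_imp_subgraph_iso)
  show "verts (matching_graph m) \<subseteq> verts (matching_graph l)"
    using assms by (auto simp: matching_graph_def)
  show "edges (matching_graph m) \<subseteq> edges (matching_graph l)"
  proof
    fix d assume "d \<in> edges (matching_graph m)"
    then obtain i where "d = {2 * i, 2 * i + 1}" and "i < m" by (auto simp: matching_graph_def)
    with assms have "d = {2 * i, 2 * i + 1} \<and> i < l" by linarith
    then show "d \<in> edges (matching_graph l)"
      unfolding matching_graph_def ugraph.select_convs mem_Collect_eq by (rule exI)
  qed
qed

lemma turan_graph_subgraph_iso_mono:
  assumes "N \<le> N'"
  shows "subgraph_iso (turan_graph N q) (turan_graph N' q)"
proof (rule subgraph_imp_subgraph_iso)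
  show "verts (turan_graph N q) \<subseteq> verts (turan_graph N' q)"
    using assms by (auto simp: turan_graph_def)
  show "edges (turan_graph N q) \<subseteq> edges (turan_graph N' q)"
  proof
    fix d assume "d \<in> edges (turan_graph N q)"
    then obtain i j where "d = {i, j}" "i < N" "j < N" "i mod q \<noteq> j mod q"
      by (auto simp: turan_graph_def)
    with assms have "d = {i, j} \<and> i < N' \<and> j < N' \<and> i mod q \<noteq> j mod q" by linarith
    then show "d \<in> edges (turan_graph N' q)"
      unfolding turan_graph_def ugraph.select_convs mem_Collect_eq by (intro exI)
  qed
qed

theorem lemma2p1:
  fixes p :: nat and T :: "'a ugraph"
  assumes "p \<ge> 3" and "is_tree T"
  defines "l \<equiv> card (verts (edge_blowup p T))"
  shows "subgraph_iso (edge_blowup p T)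
           (graph_join (path_graph l) (turan_graph ((p - 1) * l) (p - 1)))
       \<and> subgraph_iso (edge_blowup p T)
           (graph_join (matching_graph l) (turan_graph (2 * (p - 1) * l) (p - 1)))"
proof -
  let ?B = "edge_blowup p T" and ?M = "matched_verts T" and ?m = "card (edges T)"
  have wf_T: "wf_graph T" using assms(2) by (simp add: is_tree_def)
  have wf_B: "wf_graph ?B" using wf_graph_edge_blowup[OF wf_T] .
  obtain col :: "'a \<Rightarrow> nat" where "\<And>u. col u < 2" and "\<And>u v. adj T u v \<Longrightarrow> col u \<noteq> col v"
    using tree_two_colouring[OF assms(2)] by blast
  with assms(1) wf_T have unmatched:
    "subgraph_iso (induced_subgraph ?B (- ?M)) (turan_graph ((p - 1) * l) (p - 1))"
    unfolding l_def by (rule unmatched_part_subgraph_iso_turan_graph)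
  have matched: "subgraph_iso (induced_subgraph ?B ?M) (matching_graph ?m)"
    using matched_part_subgraph_iso_matching_graph[OF wf_T] .
  have "2 * ?m \<le> l"
    unfolding l_def by (rule card_edges_le_card_edge_blowup[OF assms(1) wf_T])
  then have to_path: "subgraph_iso (matching_graph ?m) (path_graph l)"
    and to_matching: "subgraph_iso (matching_graph ?m) (matching_graph l)"
    by (simp_all add: matching_graph_subgraph_iso_path_graph matching_graph_subgraph_iso_mono)
  have to_turan:
    "subgraph_iso (turan_graph ((p - 1) * l) (p - 1)) (turan_graph (2 * (p - 1) * l) (p - 1))"
    by (rule turan_graph_subgraph_iso_mono) simp
  show ?thesis
  proof
    show "subgraph_iso ?B (graph_join (path_graph l) (turan_graph ((p - 1) * l) (p - 1)))"
      using subgraph_iso_graph_join[OF wf_B subgraph_iso_trans[OF matched to_path] unmatched] .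
    show "subgraph_iso ?B (graph_join (matching_graph l) (turan_graph (2 * (p - 1) * l) (p - 1)))"
      using subgraph_iso_graph_join[OF wf_B subgraph_iso_trans[OF matched to_matching]
          subgraph_iso_trans[OF unmatched to_turan]] .
  qed
qed

end
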